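(* Let $\mu$ be a left fuzzy $\Gamma$-hyperideal of a fuzzy $\Gamma$-hypersemigroup $(M,\circ)$. Then (i) $\mu\circ\gamma\circ m$ is a left fuzzy $\Gamma$-hyperideal of $(M,\circ)$ for all $m\in M$, $\gamma\in\Gamma$; (ii) $\mu\circ\gamma\circ\chi_M$ is a left fuzzy $\Gamma$-hyperideal of $(M,\circ)$ for all $\gamma\in\Gamma$.
   Context: $M,\Gamma$ are nonempty sets; a fuzzy subset of $M$ is a map $M\to[0,1]$. A fuzzy $\Gamma$-hyperoperation assigns to each $(a,\gamma,b)\in M\times\Gamma\times M$ a fuzzy subset $a\circ\gamma\circ b$. For $a\in M$ and fuzzy $\mu$: $(a\circ\gamma\circ\mu)(r)=\bigvee_{t\in M}((a\circ\gamma\circ t)(r)\wedge\mu(t))$ if $\mu\ne0$, else $0$; $(\mu\circ\gamma\circ a)(r)=\bigvee_{t\in M}(\mu(t)\wedge(t\circ\gamma\circ a)(r))$ if $\mu\ne0$, else $0$. For fuzzy $\mu,\nu$: $(\mu\circ\gamma\circ\nu)(t)=\bigvee_{p,q\in M}(\mu(p)\wedge(p\circ\gamma\circ q)(t)\wedge\nu(q))$. $(M,\circ)$ is a fuzzy $\Gamma$-hypersemigroup if $(a\circ\alpha\circ b)\circ\beta\circ c=a\circ\alpha\circ(b\circ\beta\circ c)$ for all $a,b,c\in M$, $\alpha,\beta\in\Gamma$. $\chi_M$ is the constant function $1$ on $M$. For fuzzy sets, $\mu\subseteq\nu$ means $\mu(x)\le\nu(x)$ for all $x$. A fuzzy subset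 $\mu$ is a left fuzzy $\Gamma$-hyperideal if $a\circ\gamma\circ\mu\subseteq\mu$ for all $a\in M$, $\gamma\in\Gamma$. *)

theory Defs
  imports Complex_Main
begin

text \<open>M is modelled by the type 'm, Gamma by the type 'g (types are nonempty).\<close>

definition fuzzy_set :: "('m \<Rightarrow> real) \<Rightarrow> bool" where
  "fuzzy_set \<mu> \<longleftrightarrow> (\<forall>x. 0 \<le> \<mu> x \<and> \<mu> x \<le> 1)"

definition fuzzy_hyperop :: "('m \<Rightarrow> 'g \<Rightarrow> 'm \<Rightarrow> ('m \<Rightarrow> real)) \<Rightarrow> bool" where
  "fuzzy_hyperop hop \<longleftrightarrow> (\<forall>a g b. fuzzy_set (hop a g b))"

definition elem_fuzzy :: "('m \<Rightarrow> 'g \<Rightarrow> 'm \<Rightarrow> ('m \<Rightarrow> real)) \<Rightarrow> 'm \<Rightarrow> 'g \<Rightarrow> ('m \<Rightarrow> real) \<Rightarrow> ('m \<Rightarrow> real)" where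
  "elem_fuzzy hop a g \<mu> =
     (if \<mu> = (\<lambda>_. 0) then (\<lambda>_. 0) else (\<lambda>r. SUP t. min (hop a g t r) (\<mu> t)))"

definition fuzzy_elem :: "('m \<Rightarrow> 'g \<Rightarrow> 'm \<Rightarrow> ('m \<Rightarrow> real)) \<Rightarrow> ('m \<Rightarrow> real) \<Rightarrow> 'g \<Rightarrow> 'm \<Rightarrow> ('m \<Rightarrow> real)" where
  "fuzzy_elem hop \<mu> g a =
     (if \<mu> = (\<lambda>_. 0) then (\<lambda>_. 0) else (\<lambda>r. SUP t. min (\<mu> t) (hop t g a r)))"

definition fuzzy_fuzzy :: "('m \<Rightarrow> 'g \<Rightarrow> 'm \<Rightarrow> ('m \<Rightarrow> real)) \<Rightarrow> ('m \<Rightarrow> real) \<Rightarrow> 'g \<Rightarrow> ('m \<Rightarrow> real) \<Rightarrow> ('m \<Rightarrow> real)" where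
  "fuzzy_fuzzy hop \<mu> g \<nu> = (\<lambda>t. SUP (p, q). min (\<mu> p) (min (hop p g q t) (\<nu> q)))"

definition fuzzy_gamma_hypersemigroup :: "('m \<Rightarrow> 'g \<Rightarrow> 'm \<Rightarrow> ('m \<Rightarrow> real)) \<Rightarrow> bool" where
  "fuzzy_gamma_hypersemigroup hop \<longleftrightarrow> fuzzy_hyperop hop \<and>
     (\<forall>a b c \<alpha> \<beta>. fuzzy_elem hop (hop a \<alpha> b) \<beta> c = elem_fuzzy hop a \<alpha> (hop b \<beta> c))"

definition chi_M :: "'m \<Rightarrow> real" where
  "chi_M = (\<lambda>_. 1)"

definition left_fuzzy_gamma_hyperideal :: "('m \<Rightarrow> 'g \<Rightarrow> 'm \<Rightarrow> ('m \<Rightarrow> real)) \<Rightarrow> ('m \<Rightarrow> real) \<Rightarrow> bool" where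
  "left_fuzzy_gamma_hyperideal hop \<mu> \<longleftrightarrow> fuzzy_set \<mu> \<and>
     (\<forall>a g x. elem_fuzzy hop a g \<mu> x \<le> \<mu> x)"

end

theory Submission
  imports Defs
begin

text \<open>Everything reduces to pointwise inequalities between minima: \<mu> is a left hyperideal iff
min ((a \<circ> g \<circ> t) u) (\<mu> t) \<le> \<mu> u for all a, g, t, u. For (i), a point of
a \<circ> g \<circ> (\<mu> \<circ> \<gamma> \<circ> m) is reached through some t carrying weight at most \<mu> t;
associativity rewrites a \<circ> g \<circ> (t \<circ> \<gamma> \<circ> m) as (a \<circ> g \<circ> t) \<circ> \<gamma> \<circ> m,
and the ideal property moves the weight \<mu> t onto the points of a \<circ> g \<circ> t. For (ii),
\<mu> \<circ> \<gamma> \<circ> \<chi>_M is the pointwise supremum over m of the fuzzy sets in (i), and a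
supremum of left hyperideals is again one.\<close>

lemma le_SUP_bounded:
  fixes f :: "'a \<Rightarrow> real"
  assumes "\<And>t. f t \<le> B"
  shows "f t \<le> (SUP t. f t)"
  by (rule cSUP_upper) (auto intro!: bdd_aboveI2[where M = B] assms)

lemma min_SUP_le:
  fixes f :: "'a \<Rightarrow> real"
  assumes "\<And>t. f t \<le> B" and "\<And>t. min c (f t) \<le> d"
  shows "min c (SUP t. f t) \<le> d"
proof (cases "c \<le> d")
  case False
  then have "\<And>t. f t \<le> d" using assms(2) by (metis min_le_iff_disj)
  then have "(SUP t. f t) \<le> d" by (simp add: cSUP_least)
  then show ?thesis by simp
qed simp

lemma elem_fuzzy_ge:
  assumes "fuzzy_set \<mu>"
  shows "min (hop a g t r) (\<mu> t) \<le> elem_fuzzy hop a g \<mu> r"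
proof (cases "\<mu> = (\<lambda>_. 0)")
  case False
  have "\<And>t. min (hop a g t r) (\<mu> t) \<le> 1" using assms by (simp add: fuzzy_set_def min_le_iff_disj)
  then have "min (hop a g t r) (\<mu> t) \<le> (SUP t. min (hop a g t r) (\<mu> t))" by (rule le_SUP_bounded)
  with False show ?thesis by (simp add: elem_fuzzy_def)
qed (simp add: elem_fuzzy_def)

lemma fuzzy_elem_ge:
  assumes "fuzzy_set \<mu>"
  shows "min (\<mu> t) (hop t g a r) \<le> fuzzy_elem hop \<mu> g a r"
proof (cases "\<mu> = (\<lambda>_. 0)")
  case False
  have "\<And>t. min (\<mu> t) (hop t g a r) \<le> 1" using assms by (simp add: fuzzy_set_def min_le_iff_disj)
  then have "min (\<mu> t) (hop t g a r) \<le> (SUP t. min (\<mu> t) (hop t g a r))" by (rule le_SUP_bounded)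
  with False show ?thesis by (simp add: fuzzy_elem_def)
qed (simp add: fuzzy_elem_def)

lemma elem_fuzzy_leI:
  assumes "\<And>t. min (hop a g t r) (\<mu> t) \<le> c" and "0 \<le> c"
  shows "elem_fuzzy hop a g \<mu> r \<le> c"
  using assms by (simp add: elem_fuzzy_def cSUP_least)

lemma fuzzy_elem_leI:
  assumes "\<And>t. min (\<mu> t) (hop t g a r) \<le> c" and "0 \<le> c"
  shows "fuzzy_elem hop \<mu> g a r \<le> c"
  using assms by (simp add: fuzzy_elem_def cSUP_least)

lemma min_fuzzy_elem_leI:
  assumes "fuzzy_set \<mu>" and "\<And>t. min c (min (\<mu> t) (hop t g a r)) \<le> d" and "0 \<le> d"
  shows "min c (fuzzy_elem hop \<mu> g a r) \<le> d"
proof (cases "\<mu> = (\<lambda>_. 0)")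
  case True
  then show ?thesis using assms(3) by (simp add: fuzzy_elem_def min_le_iff_disj)
next
  case False
  have "\<And>t. min (\<mu> t) (hop t g a r) \<le> 1" using assms(1) by (simp add: fuzzy_set_def min_le_iff_disj)
  then have "min c (SUP t. min (\<mu> t) (hop t g a r)) \<le> d" using assms(2) by (rule min_SUP_le)
  with False show ?thesis by (simp add: fuzzy_elem_def)
qed

lemma fuzzy_set_fuzzy_elem:
  assumes "fuzzy_hyperop hop" and "fuzzy_set \<mu>"
  shows "fuzzy_set (fuzzy_elem hop \<mu> g a)"
  unfolding fuzzy_set_def
proof
  fix r
  obtain t :: 'a where True by simp
  have "0 \<le> min (\<mu> t) (hop t g a r)"
    using assms by (simp add: fuzzy_set_def fuzzy_hyperop_def)
  also have "\<dots> \<le> fuzzy_elem hop \<mu> g a r" using assms(2) by (rule fuzzy_elem_ge)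
  finally show "0 \<le> fuzzy_elem hop \<mu> g a r \<and> fuzzy_elem hop \<mu> g a r \<le> 1"
    using assms(2) by (auto simp: fuzzy_set_def min_le_iff_disj intro!: fuzzy_elem_leI)
qed

lemma left_fuzzy_gamma_hyperideal_iff:
  "left_fuzzy_gamma_hyperideal hop \<mu> \<longleftrightarrow>
     fuzzy_set \<mu> \<and> (\<forall>a g t u. min (hop a g t u) (\<mu> t) \<le> \<mu> u)"
  unfolding left_fuzzy_gamma_hyperideal_def
  by (meson elem_fuzzy_ge elem_fuzzy_leI fuzzy_set_def order_trans)

text \<open>The truncation by c is what lets the weight \<mu> t be carried through associativity in
part (i).\<close>

lemma min_fuzzy_elem_mono:
  assumes "fuzzy_hyperop hop" and "fuzzy_set \<mu>" and "fuzzy_set \<nu>"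
    and "\<And>u. min c (\<nu> u) \<le> \<mu> u"
  shows "min c (fuzzy_elem hop \<nu> \<gamma> m x) \<le> fuzzy_elem hop \<mu> \<gamma> m x"
proof (rule min_fuzzy_elem_leI[OF assms(3)])
  show "0 \<le> fuzzy_elem hop \<mu> \<gamma> m x"
    using fuzzy_set_fuzzy_elem[OF assms(1,2)] by (simp add: fuzzy_set_def)
  fix u
  have "min c (min (\<nu> u) (hop u \<gamma> m x)) \<le> min (\<mu> u) (hop u \<gamma> m x)"
    using assms(4)[of u] by (metis min.assoc min.mono order_refl)
  also have "\<dots> \<le> fuzzy_elem hop \<mu> \<gamma> m x" using assms(2) by (rule fuzzy_elem_ge)
  finally show "min c (min (\<nu> u) (hop u \<gamma> m x)) \<le> fuzzy_elem hop \<mu> \<gamma> m x" .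
qed

lemma left_fuzzy_gamma_hyperideal_fuzzy_elem:
  assumes semigroup: "fuzzy_gamma_hypersemigroup hop"
    and ideal: "left_fuzzy_gamma_hyperideal hop \<mu>"
  shows "left_fuzzy_gamma_hyperideal hop (fuzzy_elem hop \<mu> \<gamma> m)"
proof -
  have hop: "fuzzy_hyperop hop"
    and assoc: "\<And>a \<alpha> b \<beta> c. fuzzy_elem hop (hop a \<alpha> b) \<beta> c = elem_fuzzy hop a \<alpha> (hop b \<beta> c)"
    using semigroup by (auto simp: fuzzy_gamma_hypersemigroup_def)
  have hop_fuzzy: "\<And>a g b. fuzzy_set (hop a g b)" using hop by (simp add: fuzzy_hyperop_def)
  have \<mu>: "fuzzy_set \<mu>" and absorb: "\<And>a g t u. min (hop a g t u) (\<mu> t) \<le> \<mu> u"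
    using ideal by (auto simp: left_fuzzy_gamma_hyperideal_iff)
  have "min (hop a g s x) (fuzzy_elem hop \<mu> \<gamma> m s) \<le> fuzzy_elem hop \<mu> \<gamma> m x" for a g s x
  proof (rule min_fuzzy_elem_leI[OF \<mu>])
    show "0 \<le> fuzzy_elem hop \<mu> \<gamma> m x"
      using fuzzy_set_fuzzy_elem[OF hop \<mu>] by (simp add: fuzzy_set_def)
    fix t
    have "min (hop a g s x) (hop t \<gamma> m s) \<le> elem_fuzzy hop a g (hop t \<gamma> m) x"
      using hop_fuzzy by (rule elem_fuzzy_ge)
    also have "\<dots> = fuzzy_elem hop (hop a g t) \<gamma> m x" by (simp add: assoc)
    finally have "min (hop a g s x) (min (\<mu> t) (hop t \<gamma> m s))
        \<le> min (\<mu> t) (fuzzy_elem hop (hop a g t) \<gamma> m x)"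
      by (metis min.left_commute min.mono order_refl)
    also have "\<dots> \<le> fuzzy_elem hop \<mu> \<gamma> m x"
      using hop \<mu> hop_fuzzy by (rule min_fuzzy_elem_mono) (metis absorb min.commute)
    finally show "min (hop a g s x) (min (\<mu> t) (hop t \<gamma> m s)) \<le> fuzzy_elem hop \<mu> \<gamma> m x" .
  qed
  then show ?thesis
    using fuzzy_set_fuzzy_elem[OF hop \<mu>] by (simp add: left_fuzzy_gamma_hyperideal_iff)
qed

lemma left_fuzzy_gamma_hyperideal_SUP:
  assumes "\<And>q. left_fuzzy_gamma_hyperideal hop (\<nu> q)"
  shows "left_fuzzy_gamma_hyperideal hop (\<lambda>x. SUP q. \<nu> q x)"
proof -
  have \<nu>: "\<And>q x. 0 \<le> \<nu> q x \<and> \<nu> q x \<le> 1"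
    and absorb: "\<And>q a g t u. min (hop a g t u) (\<nu> q t) \<le> \<nu> q u"
    using assms by (auto simp: left_fuzzy_gamma_hyperideal_iff fuzzy_set_def)
  have upper: "\<nu> q x \<le> (SUP q. \<nu> q x)" for q x
    by (rule le_SUP_bounded[where B = 1]) (simp add: \<nu>)
  have "fuzzy_set (\<lambda>x. SUP q. \<nu> q x)"
    unfolding fuzzy_set_def using \<nu> upper by (meson cSUP_least UNIV_not_empty order_trans)
  moreover have "min (hop a g t u) (SUP q. \<nu> q t) \<le> (SUP q. \<nu> q u)" for a g t u
    by (rule min_SUP_le[where B = 1]) (use \<nu> absorb upper order_trans in blast)+
  ultimately show ?thesis by (simp add: left_fuzzy_gamma_hyperideal_iff)
qed

lemma fuzzy_fuzzy_chi_M_eq_SUP: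
  assumes "fuzzy_hyperop hop" and "fuzzy_set \<mu>"
  shows "fuzzy_fuzzy hop \<mu> \<gamma> chi_M = (\<lambda>x. SUP q. fuzzy_elem hop \<mu> \<gamma> q x)"
proof
  fix x
  have hop: "\<And>a g b. 0 \<le> hop a g b x \<and> hop a g b x \<le> 1"
    using assms(1) by (simp add: fuzzy_hyperop_def fuzzy_set_def)
  have elem: "\<And>q. 0 \<le> fuzzy_elem hop \<mu> \<gamma> q x \<and> fuzzy_elem hop \<mu> \<gamma> q x \<le> 1"
    using fuzzy_set_fuzzy_elem[OF assms] by (simp add: fuzzy_set_def)
  let ?f = "\<lambda>(p, q). min (\<mu> p) (min (hop p \<gamma> q x) (chi_M q))"
  have f_eq: "?f (p, q) = min (\<mu> p) (hop p \<gamma> q x)" for p q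
    using hop by (simp add: chi_M_def)
  have f_bounded: "?f pq \<le> 1" for pq
    using assms(2) by (auto simp: fuzzy_set_def min_le_iff_disj split: prod.split)
  have f_le_ff: "min (\<mu> p) (hop p \<gamma> q x) \<le> fuzzy_fuzzy hop \<mu> \<gamma> chi_M x" for p q
    unfolding fuzzy_fuzzy_def f_eq[symmetric] by (rule le_SUP_bounded[OF f_bounded])
  have "fuzzy_fuzzy hop \<mu> \<gamma> chi_M x \<le> (SUP q. fuzzy_elem hop \<mu> \<gamma> q x)"
    unfolding fuzzy_fuzzy_def
  proof (rule cSUP_least)
    fix pq :: "'a \<times> 'a"
    obtain p q where pq: "pq = (p, q)" by fastforce
    have "?f pq \<le> fuzzy_elem hop \<mu> \<gamma> q x"
      using fuzzy_elem_ge[OF assms(2)] by (simp only: pq f_eq split)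
    also have "\<dots> \<le> (SUP q. fuzzy_elem hop \<mu> \<gamma> q x)"
      by (rule le_SUP_bounded[where B = 1]) (simp add: elem)
    finally show "?f pq \<le> (SUP q. fuzzy_elem hop \<mu> \<gamma> q x)" .
  qed simp
  moreover have "(SUP q. fuzzy_elem hop \<mu> \<gamma> q x) \<le> fuzzy_fuzzy hop \<mu> \<gamma> chi_M x"
  proof (rule cSUP_least)
    obtain p q :: 'a where True by simp
    have "0 \<le> min (\<mu> p) (hop p \<gamma> q x)" using hop assms(2) by (simp add: fuzzy_set_def)
    also note f_le_ff
    finally have "0 \<le> fuzzy_fuzzy hop \<mu> \<gamma> chi_M x" .
    then show "fuzzy_elem hop \<mu> \<gamma> q x \<le> fuzzy_fuzzy hop \<mu> \<gamma> chi_M x" for q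
      by (intro fuzzy_elem_leI f_le_ff)
  qed simp
  ultimately show "fuzzy_fuzzy hop \<mu> \<gamma> chi_M x = (SUP q. fuzzy_elem hop \<mu> \<gamma> q x)"
    by (rule antisym)
qed

theorem theorem4p7:
  fixes hop :: "'m \<Rightarrow> 'g \<Rightarrow> 'm \<Rightarrow> ('m \<Rightarrow> real)" and \<mu> :: "'m \<Rightarrow> real"
  assumes "fuzzy_gamma_hypersemigroup hop"
    and "left_fuzzy_gamma_hyperideal hop \<mu>"
  shows "(\<forall>m \<gamma>. left_fuzzy_gamma_hyperideal hop (fuzzy_elem hop \<mu> \<gamma> m))
    \<and> (\<forall>\<gamma>. left_fuzzy_gamma_hyperideal hop (fuzzy_fuzzy hop \<mu> \<gamma> chi_M))"
proof -
  have part_i: "left_fuzzy_gamma_hyperideal hop (fuzzy_elem hop \<mu> \<gamma> m)" for m \<gamma>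
    using assms by (rule left_fuzzy_gamma_hyperideal_fuzzy_elem)
  have "fuzzy_hyperop hop" and "fuzzy_set \<mu>"
    using assms by (simp_all add: fuzzy_gamma_hypersemigroup_def left_fuzzy_gamma_hyperideal_def)
  then have "fuzzy_fuzzy hop \<mu> \<gamma> chi_M = (\<lambda>x. SUP q. fuzzy_elem hop \<mu> \<gamma> q x)" for \<gamma>
    by (rule fuzzy_fuzzy_chi_M_eq_SUP)
  with part_i show ?thesis by (simp add: left_fuzzy_gamma_hyperideal_SUP)
qed

end
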